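(* Let $T>0$, $\gamma\in(0,T]$, $\mathcal{T}=[0,T]$, $\mathcal{D}$ the set of Lebesgue measurable $\delta:\mathcal{T}\to[-1,1]$ with $\int_{\mathcal{T}}|\delta(t)|\,\mathrm{d}t\le\gamma$, $\eta^+,\eta^-\in(0,1]$, $\eta_d=\frac{1}{\eta^-}-\eta^+$, and $y(x^b,x^r,\delta,y_0,t)=y_0+\int_0^t\big(\eta^+[x^b+\delta(s)x^r]^+-\frac{1}{\eta^-}[x^b+\delta(s)x^r]^-\big)\mathrm{d}s$. Let $\tilde\delta$ be a random process with trajectories in $\mathcal{D}$, let $\mathbb{P}_\xi$ be the probability measure on $[-1,1]$ given by $\mathbb{P}_\xi(B)=\mathbb{E}\big[\frac1T\int_{\mathcal{T}}\mathbf 1_B(\tilde\delta(t))\,\mathrm{d}t\big]$, assumed to have mean zero, with cumulative distribution function $F$, and let $\varphi(z)=\int_{-1}^zF(\xi)\,\mathrm{d}\xi$. Then for all $x^b\in\mathbb{R}$, $x^r\ge0$, $y_0\in\mathbb{R}$, $$\mathbb{E}\big[y(x^b,x^r,\tilde\delta,y_0,T)\big]=y_0+T\Big(\eta^+x^b-\eta_d\,x^r\varphi\Big(-\frac{x^b}{x^r}\Big)\Big),$$ where for $x^r=0$ the term $x^r\varphi(-x^b/x^r)$ is understood as its limit $[x^b]^-$ (perspective function). Moreover, this expected terminal state-of-charge is continuous and jointly concave in $(x^b,x^r)\in\mathbb{R}\times\mathbb{R}_+$, strictly increasing and unbounded above in $x^b$, and nonincreasing in $x^r$.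
   Context: $[a]^+=\max\{a,0\}$, $[a]^-=\max\{-a,0\}$; the process $\tilde\delta$ is assumed jointly measurable in time and outcome so that the expectations are well defined. $\varphi$ is the super-cumulative distribution function of $\mathbb{P}_\xi$. *)

theory Defs
  imports "HOL-Probability.Probability"
begin

definition pospart :: "real \<Rightarrow> real" where
  "pospart a = max a 0"

definition negpart :: "real \<Rightarrow> real" where
  "negpart a = max (- a) 0"

text \<open>Admissible deviation trajectories: the set D (trajectories are functions on the
  reals; only their restriction to [0,T] matters).\<close>
definition admissible :: "real \<Rightarrow> real \<Rightarrow> (real \<Rightarrow> real) \<Rightarrow> bool" where
  "admissible T \<gamma> \<delta> \<longleftrightarrow>
     \<delta> \<in> borel_measurable (restrict_space lebesgue {0..T})
   \<and> (\<forall>t\<in>{0..T}. \<delta> t \<in> {-1..1})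
   \<and> (\<integral>t\<in>{0..T}. \<bar>\<delta> t\<bar> \<partial>lebesgue) \<le> \<gamma>"

definition soc :: "real \<Rightarrow> real \<Rightarrow> real \<Rightarrow> real \<Rightarrow> (real \<Rightarrow> real) \<Rightarrow> real \<Rightarrow> real \<Rightarrow> real" where
  "soc \<eta>p \<eta>m xb xr \<delta> y0 t =
     y0 + (\<integral>s\<in>{0..t}. (\<eta>p * pospart (xb + \<delta> s * xr)
                          - (1 / \<eta>m) * negpart (xb + \<delta> s * xr)) \<partial>lebesgue)"

definition persp :: "(real \<Rightarrow> real) \<Rightarrow> real \<Rightarrow> real \<Rightarrow> real" where
  "persp \<phi> xb xr = (if xr = 0 then negpart xb else xr * \<phi> (- xb / xr))"

end

theory Submission
  imports Defs
begin

text \<open>Along every trajectory the power depends on time only through \<open>\<delta>(t)\<close>, so by Fubini the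
  expectation of \<open>\<integral>\<^sub>0\<^sup>T g(\<delta>(t)) dt\<close> equals \<open>T\<close> times the integral of \<open>g\<close> against
  the occupation measure \<open>P\<^sub>\<xi>\<close>. Since \<open>[u]\<^sup>+ = u + [u]\<^sup>-\<close> and \<open>P\<^sub>\<xi>\<close> has mean zero, the expected
  terminal state of charge is \<open>y\<^sub>0 + T (\<eta>\<^sup>+ x\<^sup>b - \<eta>\<^sub>d G(x\<^sup>b, x\<^sup>r))\<close> with
  \<open>G(a, c) = E[a + \<xi> c]\<^sup>-\<close>. Fubini once more gives \<open>E[z - \<xi>]\<^sup>+ = \<phi>(z)\<close>, so \<open>G\<close> is the
  perspective of \<open>\<phi>\<close>. As an average of convex functions \<open>G\<close> is convex; it is Lipschitz because
  \<open>|\<xi>| \<le> 1\<close>, and antitone in \<open>a\<close>. Jensen gives \<open>G(a, c) \<ge> G(a, 0) = [a]\<^sup>-\<close>, which together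
  with convexity makes \<open>G\<close> nondecreasing in \<open>c \<ge> 0\<close>. As \<open>\<eta>\<^sub>d \<ge> 0\<close>, all claims follow.\<close>

lemma pospart_eq_add_negpart: "pospart u = u + negpart u"
  by (simp add: pospart_def negpart_def max_def)

lemma negpart_nonneg [simp]: "0 \<le> negpart u"
  by (simp add: negpart_def)

lemma pospart_nonneg [simp]: "0 \<le> pospart u"
  by (simp add: pospart_def)

lemma convex_on_negpart: "convex_on UNIV negpart"
proof (rule convex_onI)
  fix t x y :: real
  assume t: "0 < t" "t < 1"
  have "(1 - t) * - x \<le> (1 - t) * negpart x" "t * - y \<le> t * negpart y"
    using t by (intro mult_left_mono; simp add: negpart_def)+
  moreover have "0 \<le> (1 - t) * negpart x" "0 \<le> t * negpart y"
    using t by simp_all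
  ultimately show "negpart ((1 - t) *\<^sub>R x + t *\<^sub>R y) \<le> (1 - t) * negpart x + t * negpart y"
    unfolding negpart_def[of "(1 - t) *\<^sub>R x + t *\<^sub>R y"] by (simp add: algebra_simps)
qed simp

lemma negpart_antimono: "a \<le> b \<Longrightarrow> negpart b \<le> negpart a"
  by (simp add: negpart_def)

lemma negpart_diff_abs_le: "\<bar>negpart a - negpart b\<bar> \<le> \<bar>a - b\<bar>"
  by (simp add: negpart_def max_def abs_if)

lemma slope_ge_imp_strict_mono_at_top:
  fixes f :: "real \<Rightarrow> real"
  assumes "0 < k" and slope: "\<And>a b. a \<le> b \<Longrightarrow> k * (b - a) \<le> f b - f a"
  shows "strict_mono f" and "filterlim f at_top at_top"
proof -
  show "strict_mono f"
  proof (rule strict_monoI)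
    fix a b :: real
    assume "a < b"
    with \<open>0 < k\<close> have "0 < k * (b - a)"
      by simp
    with slope[of a b] \<open>a < b\<close> show "f a < f b"
      by simp
  qed
  show "filterlim f at_top at_top"
  proof (rule filterlim_at_top_mono)
    show "filterlim (\<lambda>x. f 0 + k * x) at_top at_top"
      using \<open>0 < k\<close> by (intro filterlim_tendsto_add_at_top[OF tendsto_const]
          filterlim_tendsto_pos_mult_at_top[OF tendsto_const _ filterlim_ident])
    show "\<forall>\<^sub>F x in at_top. f 0 + k * x \<le> f x"
      using eventually_ge_at_top[of "0 :: real"] by eventually_elim (use slope in force)
  qed
qed

lemma concave_on_linear:
  fixes f :: "'a::real_vector \<Rightarrow> real"
  assumes "linear f" "convex S"
  shows "concave_on S f"
  using assms by (simp add: concave_on_iff linear_add linear_scale)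

context real_distribution
begin

lemma borel_measurable_cdf [measurable]: "cdf M \<in> borel_measurable borel"
  by (rule borel_measurable_mono) (simp add: mono_def cdf_nondecreasing)

lemma cdf_eq_0_below:
  assumes "AE x in M. a \<le> x" and "s < a"
  shows "cdf M s = 0"
proof -
  have "AE x in M. x \<notin> {..s}"
    using assms(1) by eventually_elim (use assms(2) in auto)
  then show ?thesis
    unfolding cdf_def by (subst prob_eq_0) auto
qed

lemma nn_integral_pospart_diff_eq_cdf:
  assumes "AE x in M. a \<le> x"
  shows "(\<integral>\<^sup>+ x. ennreal (pospart (z - x)) \<partial>M) = (\<integral>\<^sup>+ s. ennreal (indicator {a..z} s * cdf M s) \<partial>lborel)"
proof -
  interpret pair_sigma_finite M lborel
    by (simp add: pair_sigma_finite_def sigma_finite_measure_axioms lborel.sigma_finite_measure_axioms)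
  \<comment> \<open>both sides are the area of \<open>S\<close>, integrated in the two possible orders\<close>
  define S where "S = {p :: real \<times> real. a \<le> snd p \<and> snd p \<le> z \<and> fst p \<le> snd p}"
  have S_meas: "S \<in> sets (M \<Otimes>\<^sub>M lborel)"
  proof -
    have "S = {p \<in> space (M \<Otimes>\<^sub>M lborel). a \<le> snd p \<and> snd p \<le> z \<and> fst p \<le> snd p}"
      by (auto simp: S_def space_pair_measure)
    also have "\<dots> \<in> sets (M \<Otimes>\<^sub>M lborel)" by measurable
    finally show ?thesis .
  qed
  have "(\<integral>\<^sup>+ x. ennreal (pospart (z - x)) \<partial>M) = (\<integral>\<^sup>+ x. (\<integral>\<^sup>+ s. indicator S (x, s) \<partial>lborel) \<partial>M)"
  proof (rule nn_integral_cong_AE)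
    show "AE x in M. ennreal (pospart (z - x)) = (\<integral>\<^sup>+ s. indicator S (x, s) \<partial>lborel)"
      using assms
    proof eventually_elim
      case (elim x)
      then have "(\<integral>\<^sup>+ s. indicator S (x, s) \<partial>lborel) = (\<integral>\<^sup>+ s. indicator {x..z} s \<partial>lborel)"
        by (intro nn_integral_cong) (auto simp: S_def indicator_def)
      then show ?case
        by (simp add: emeasure_lborel_Icc_eq pospart_def ennreal_eq_0_iff)
    qed
  qed
  also have "\<dots> = (\<integral>\<^sup>+ s. (\<integral>\<^sup>+ x. indicator S (x, s) \<partial>M) \<partial>lborel)"
    by (rule Fubini[symmetric]) (use S_meas in auto)
  also have "\<dots> = (\<integral>\<^sup>+ s. ennreal (indicator {a..z} s * cdf M s) \<partial>lborel)"
  proof (rule nn_integral_cong)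
    fix s
    have "(\<integral>\<^sup>+ x. indicator S (x, s) \<partial>M) = (\<integral>\<^sup>+ x. indicator {a..z} s * indicator {..s} x \<partial>M)"
      by (rule nn_integral_cong) (auto simp: S_def indicator_def)
    also have "\<dots> = indicator {a..z} s * emeasure M {..s}"
      by (rule nn_integral_cmult_indicator) simp
    finally show "(\<integral>\<^sup>+ x. indicator S (x, s) \<partial>M) = ennreal (indicator {a..z} s * cdf M s)"
      by (simp add: emeasure_eq_measure cdf_def indicator_def)
  qed
  finally show ?thesis .
qed

lemma integral_pospart_diff_eq_cdf:
  assumes "AE x in M. a \<le> x"
  shows "(\<integral>x. pospart (z - x) \<partial>M) = (LBINT s=ereal a..ereal z. cdf M s)"
proof -
  have "integrable M (\<lambda>x. pospart (z - x))"
    by (rule integrable_const_bound[where B="pospart (z - a)"])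
       (use assms in \<open>auto simp: pospart_def elim!: eventually_mono\<close>)
  moreover have "integrable lborel (\<lambda>s. indicator {a..z} s * cdf M s)"
    by (rule integrableI_bounded_set[where A="{a..z}" and B=1])
       (auto simp: indicator_def cdf_nonneg cdf_bounded_prob emeasure_lborel_Icc_eq)
  ultimately have "(\<integral>x. pospart (z - x) \<partial>M) = (\<integral>s. indicator {a..z} s * cdf M s \<partial>lborel)"
    using nn_integral_pospart_diff_eq_cdf[OF assms, of z] cdf_nonneg
    by (subst (asm) (1 2) nn_integral_eq_integral)
       (auto simp: integral_nonneg_AE)
  also have "\<dots> = (LBINT s=ereal a..ereal z. cdf M s)"
  proof (cases "a \<le> z")
    case True
    then show ?thesis
      by (simp add: interval_integral_Icc set_lebesgue_integral_def)
  next
    case False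
    have "(LBINT s : {z<..<a}. cdf M s) = (LBINT s : {z<..<a}. 0)"
      by (rule set_lebesgue_integral_cong) (auto intro!: cdf_eq_0_below[OF assms])
    with False show ?thesis
      by (simp add: interval_lebesgue_integral_def set_lebesgue_integral_def)
  qed
  finally show ?thesis .
qed

end

definition mean_negpart :: "real measure \<Rightarrow> real \<Rightarrow> real \<Rightarrow> real" where
  "mean_negpart P a c = (\<integral>x. negpart (a + x * c) \<partial>P)"

locale unit_supported_distribution = real_distribution P for P :: "real measure" +
  assumes AE_in_unit_interval: "AE x in P. x \<in> {-1..1}"
begin

lemma integrable_continuous:
  fixes g :: "real \<Rightarrow> real"
  assumes "continuous_on UNIV g"
  shows "integrable P g"
proof -
  obtain B where B: "\<And>x. x \<in> {-1..1} \<Longrightarrow> norm (g x) \<le> B"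
    using continuous_on_compact_bound[OF compact_Icc continuous_on_subset[OF assms]] by blast
  show ?thesis
  proof (rule integrable_const_bound[where B=B])
    show "AE x in P. norm (g x) \<le> B"
      using AE_in_unit_interval by eventually_elim (rule B)
    show "g \<in> borel_measurable P"
      using borel_measurable_continuous_onI[OF assms] by simp
  qed
qed

lemma integrable_negpart_affine: "integrable P (\<lambda>x. negpart (a + x * c))"
  by (rule integrable_continuous) (simp add: negpart_def continuous_intros)

lemma mean_negpart_convex: "convex_on UNIV (\<lambda>p. mean_negpart P (fst p) (snd p))"
proof (rule convex_onI)
  fix t :: real and p q :: "real \<times> real"
  assume t: "0 < t" "t < 1"
  obtain a c b d where pq: "p = (a, c)" "q = (b, d)" by fastforce
  have "mean_negpart P ((1 - t) * a + t * b) ((1 - t) * c + t * d)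
      \<le> (\<integral>x. (1 - t) * negpart (a + x * c) + t * negpart (b + x * d) \<partial>P)"
    unfolding mean_negpart_def
  proof (rule integral_mono)
    fix x
    have "(1 - t) * a + t * b + x * ((1 - t) * c + t * d) = (1 - t) * (a + x * c) + t * (b + x * d)"
      by (simp add: algebra_simps)
    then show "negpart ((1 - t) * a + t * b + x * ((1 - t) * c + t * d))
        \<le> (1 - t) * negpart (a + x * c) + t * negpart (b + x * d)"
      using convex_onD[OF convex_on_negpart, of t "a + x * c" "b + x * d"] t by simp
  qed (simp_all add: integrable_negpart_affine)
  also have "\<dots> = (1 - t) * mean_negpart P a c + t * mean_negpart P b d"
    by (simp add: mean_negpart_def integrable_negpart_affine)
  finally show "mean_negpart P (fst ((1 - t) *\<^sub>R p + t *\<^sub>R q)) (snd ((1 - t) *\<^sub>R p + t *\<^sub>R q))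
      \<le> (1 - t) * mean_negpart P (fst p) (snd p) + t * mean_negpart P (fst q) (snd q)"
    by (simp add: pq)
qed simp

lemma mean_negpart_lipschitz:
  "\<bar>mean_negpart P a c - mean_negpart P b d\<bar> \<le> \<bar>a - b\<bar> + \<bar>c - d\<bar>"
proof -
  have "\<bar>mean_negpart P a c - mean_negpart P b d\<bar>
      = \<bar>\<integral>x. negpart (a + x * c) - negpart (b + x * d) \<partial>P\<bar>"
    by (simp add: mean_negpart_def integrable_negpart_affine)
  also have "\<dots> \<le> (\<integral>x. \<bar>negpart (a + x * c) - negpart (b + x * d)\<bar> \<partial>P)"
    by (rule integral_abs_bound)
  also have "\<dots> \<le> (\<integral>x. \<bar>a - b\<bar> + \<bar>c - d\<bar> \<partial>P)"
  proof (rule integral_mono_AE)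
    show "AE x in P. \<bar>negpart (a + x * c) - negpart (b + x * d)\<bar> \<le> \<bar>a - b\<bar> + \<bar>c - d\<bar>"
      using AE_in_unit_interval
    proof eventually_elim
      case (elim x)
      then have "\<bar>x\<bar> \<le> 1"
        by auto
      then have "\<bar>x * (c - d)\<bar> \<le> \<bar>c - d\<bar>"
        by (simp add: abs_mult mult_left_le_one_le)
      then show ?case
        using negpart_diff_abs_le[of "a + x * c" "b + x * d"] by (simp add: algebra_simps)
    qed
  qed (simp_all add: integrable_negpart_affine)
  finally show ?thesis
    using prob_space by simp
qed

lemma continuous_on_mean_negpart [continuous_intros]:
  assumes "continuous_on S f" "continuous_on S g"
  shows "continuous_on S (\<lambda>x. mean_negpart P (f x) (g x))"
proof -
  have "2-lipschitz_on UNIV (\<lambda>p. mean_negpart P (fst p) (snd p))"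
  proof (rule lipschitz_onI)
    fix p q :: "real \<times> real"
    show "dist (mean_negpart P (fst p) (snd p)) (mean_negpart P (fst q) (snd q)) \<le> 2 * dist p q"
      using mean_negpart_lipschitz[of "fst p" "snd p" "fst q" "snd q"]
        dist_fst_le[of p q] dist_snd_le[of p q]
      by (simp add: dist_real_def)
  qed simp
  then have "continuous_on UNIV (\<lambda>p. mean_negpart P (fst p) (snd p))"
    by (rule lipschitz_on_continuous_on)
  from continuous_on_compose2[OF this continuous_on_Pair[OF assms]] show ?thesis
    by simp
qed

lemma mean_negpart_antimono: "a \<le> b \<Longrightarrow> mean_negpart P b c \<le> mean_negpart P a c"
  unfolding mean_negpart_def
  by (intro integral_mono integrable_negpart_affine negpart_antimono) simp

lemma mean_negpart_zero_right [simp]: "mean_negpart P a 0 = negpart a"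
  using prob_space by (simp add: mean_negpart_def)

lemma negpart_le_mean_negpart:
  assumes "(\<integral>x. x \<partial>P) = 0"
  shows "negpart a \<le> mean_negpart P a c"
proof -
  have "integrable P (\<lambda>x. x)"
    by (rule integrable_continuous) simp
  then have "- a = (\<integral>x. - (a + x * c) \<partial>P)"
    using assms prob_space by simp
  also have "\<dots> \<le> mean_negpart P a c"
    unfolding mean_negpart_def
    by (intro integral_mono integrable_negpart_affine) (simp_all add: \<open>integrable P (\<lambda>x. x)\<close> negpart_def)
  finally show ?thesis
    using integral_nonneg_AE[of "\<lambda>x. negpart (a + x * c)" P]
    by (simp add: negpart_def mean_negpart_def)
qed

lemma mean_negpart_mono:
  assumes "(\<integral>x. x \<partial>P) = 0" and "0 \<le> r" "r \<le> s"
  shows "mean_negpart P a r \<le> mean_negpart P a s"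
proof (cases "s = 0")
  case True
  with assms show ?thesis by simp
next
  case False
  define t where "t = r / s"
  have t: "0 \<le> t" "t \<le> 1" "r = (1 - t) * 0 + t * s"
    using assms False by (auto simp: t_def)
  have "mean_negpart P a r \<le> (1 - t) * mean_negpart P a 0 + t * mean_negpart P a s"
    using convex_onD[OF mean_negpart_convex, of t "(a, 0)" "(a, s)"] t by (simp add: algebra_simps)
  also have "\<dots> \<le> mean_negpart P a s"
    using mult_left_mono[OF negpart_le_mean_negpart[OF assms(1)], of "1 - t" a s] t
    by (simp add: algebra_simps)
  finally show ?thesis .
qed

lemma persp_integral_cdf_eq_mean_negpart:
  assumes "0 \<le> c"
  shows "persp (\<lambda>z. LBINT \<xi>=-1..z. cdf P \<xi>) a c = mean_negpart P a c"
proof (cases "c = 0")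
  case True
  then show ?thesis by (simp add: persp_def)
next
  case False
  with assms have c: "0 < c" by simp
  have lower: "AE x in P. -1 \<le> x"
    using AE_in_unit_interval by eventually_elim simp
  have "mean_negpart P a c = (\<integral>x. c * pospart (- a / c - x) \<partial>P)"
    unfolding mean_negpart_def
  proof (rule Bochner_Integration.integral_cong)
    fix x
    have "c * (- a / c - x) = - (a + x * c)"
      using c by (simp add: field_simps)
    then show "negpart (a + x * c) = c * pospart (- a / c - x)"
      using c by (simp add: negpart_def pospart_def max_mult_distrib_left)
  qed simp
  also have "\<dots> = c * (LBINT s=ereal (-1)..ereal (- a / c). cdf P s)"
    by (simp add: integral_pospart_diff_eq_cdf[OF lower])
  finally show ?thesis
    using c by (simp add: persp_def one_ereal_def)
qed

end

locale occupation_measure =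
  fixes M :: "'a measure" and P :: "real measure" and \<delta> :: "'a \<Rightarrow> real \<Rightarrow> real" and T :: real
  assumes prob_space_M: "prob_space M" and T_pos: "0 < T"
    and trajectory_range: "\<forall>\<omega>\<in>space M. \<forall>t\<in>{0..T}. \<delta> \<omega> t \<in> {-1..1}"
    and joint_measurable:
      "(\<lambda>(\<omega>, t). \<delta> \<omega> t) \<in> borel_measurable (M \<Otimes>\<^sub>M restrict_space lebesgue {0..T})"
    and sets_P: "sets P = sets borel"
    and emeasure_P: "\<forall>B\<in>sets borel. emeasure P B =
           ennreal (\<integral>\<omega>. (1 / T) * (\<integral>t\<in>{0..T}. indicator B (\<delta> \<omega> t) \<partial>lebesgue) \<partial>M)"
begin

abbreviation horizon :: "real measure" where
  "horizon \<equiv> restrict_space lebesgue {0..T}"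

sublocale M: prob_space M
  by (rule prob_space_M)

sublocale horizon: finite_measure horizon
  using T_pos by (intro finite_measureI) (simp add: emeasure_restrict_space)

sublocale pair: pair_sigma_finite M horizon ..

sublocale pair_finite: finite_measure "M \<Otimes>\<^sub>M horizon"
  by (intro finite_measure_pair_measure M.finite_measure_axioms horizon.finite_measure_axioms)

lemma trajectory_range_pair: "z \<in> space (M \<Otimes>\<^sub>M horizon) \<Longrightarrow> (\<lambda>(\<omega>, t). \<delta> \<omega> t) z \<in> {-1..1}"
  using trajectory_range by (auto simp: space_pair_measure)

lemma integral_time_integral_eq_pair_integral:
  fixes f :: "'a \<times> real \<Rightarrow> real"
  assumes "integrable (M \<Otimes>\<^sub>M horizon) f"
  shows "integrable M (\<lambda>\<omega>. \<integral>t\<in>{0..T}. f (\<omega>, t) \<partial>lebesgue)"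
    and "(\<integral>\<omega>. (\<integral>t\<in>{0..T}. f (\<omega>, t) \<partial>lebesgue) \<partial>M) = (\<integral>z. f z \<partial>(M \<Otimes>\<^sub>M horizon))"
proof -
  have time_integral: "(\<integral>t\<in>{0..T}. f (\<omega>, t) \<partial>lebesgue) = (\<integral>t. f (\<omega>, t) \<partial>horizon)" for \<omega>
    by (simp add: set_lebesgue_integral_def integral_restrict_space)
  show "integrable M (\<lambda>\<omega>. \<integral>t\<in>{0..T}. f (\<omega>, t) \<partial>lebesgue)"
    unfolding time_integral using pair.integrable_fst'[OF assms] by simp
  show "(\<integral>\<omega>. (\<integral>t\<in>{0..T}. f (\<omega>, t) \<partial>lebesgue) \<partial>M) = (\<integral>z. f z \<partial>(M \<Otimes>\<^sub>M horizon))"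
    unfolding time_integral using pair.integral_fst'[OF assms] by simp
qed

lemma occupation_eq_density_distr:
  "P = density (distr (M \<Otimes>\<^sub>M horizon) borel (\<lambda>(\<omega>, t). \<delta> \<omega> t)) (\<lambda>_. ennreal (1 / T))"
proof (rule measure_eqI)
  show "sets P = sets (density (distr (M \<Otimes>\<^sub>M horizon) borel (\<lambda>(\<omega>, t). \<delta> \<omega> t)) (\<lambda>_. ennreal (1 / T)))"
    using sets_P by simp
  fix B
  assume "B \<in> sets P"
  then have B [measurable]: "B \<in> sets borel"
    using sets_P by simp
  let ?D = "\<lambda>(\<omega>, t). \<delta> \<omega> t"
  have D_meas [measurable]: "?D \<in> borel_measurable (M \<Otimes>\<^sub>M horizon)"
    using joint_measurable by simp
  have ind_int: "integrable (M \<Otimes>\<^sub>M horizon) (\<lambda>z. indicator B (?D z) :: real)"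
    by (rule pair_finite.integrable_const_bound[where B=1]) auto
  have "emeasure (density (distr (M \<Otimes>\<^sub>M horizon) borel ?D) (\<lambda>_. ennreal (1 / T))) B
      = ennreal (1 / T) * emeasure (M \<Otimes>\<^sub>M horizon) (?D -` B \<inter> space (M \<Otimes>\<^sub>M horizon))"
    by (simp add: emeasure_density_const emeasure_distr)
  also have "emeasure (M \<Otimes>\<^sub>M horizon) (?D -` B \<inter> space (M \<Otimes>\<^sub>M horizon))
      = ennreal (\<integral>z. indicator B (?D z) \<partial>(M \<Otimes>\<^sub>M horizon))"
    by (simp add: pair_finite.emeasure_eq_measure indicator_vimage[symmetric]
        flip: Bochner_Integration.integral_indicator)
  also have "(\<integral>z. indicator B (?D z) \<partial>(M \<Otimes>\<^sub>M horizon))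
      = (\<integral>\<omega>. (\<integral>t\<in>{0..T}. indicator B (\<delta> \<omega> t) \<partial>lebesgue) \<partial>M :: real)"
    using integral_time_integral_eq_pair_integral(2)[OF ind_int] by simp
  finally show "emeasure P B = emeasure (density (distr (M \<Otimes>\<^sub>M horizon) borel ?D) (\<lambda>_. ennreal (1 / T))) B"
    using emeasure_P B T_pos
    by (simp add: ennreal_mult'[symmetric] Bochner_Integration.integral_mult_right_zero)
qed

lemma emeasure_P_eq_pair:
  assumes "B \<in> sets borel"
  shows "emeasure P B = ennreal (1 / T) * emeasure (M \<Otimes>\<^sub>M horizon) ((\<lambda>(\<omega>, t). \<delta> \<omega> t) -` B \<inter> space (M \<Otimes>\<^sub>M horizon))"
  using assms joint_measurable
  by (subst occupation_eq_density_distr) (simp add: emeasure_density_const emeasure_distr)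

sublocale unit_supported_distribution P
proof -
  have "emeasure P UNIV = ennreal (1 / T) * (emeasure M (space M) * emeasure horizon (space horizon))"
    by (simp add: emeasure_P_eq_pair horizon.emeasure_pair_measure_Times space_pair_measure)
  also have "\<dots> = 1"
    using T_pos by (simp add: emeasure_restrict_space M.emeasure_space_1 ennreal_mult'[symmetric])
  finally have "prob_space P"
    using sets_eq_imp_space_eq[OF sets_P] by (intro prob_spaceI) simp
  moreover have "(\<lambda>(\<omega>, t). \<delta> \<omega> t) -` (- {-1..1}) \<inter> space (M \<Otimes>\<^sub>M horizon) = {}"
    using trajectory_range_pair by auto
  then have "emeasure P (- {-1..1}) = 0"
    by (simp add: emeasure_P_eq_pair)
  then have "AE x in P. x \<in> {-1..1}"
    using sets_eq_imp_space_eq[OF sets_P] sets_P by (intro AE_I[of _ _ "- {-1..1}"]) auto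
  ultimately show "unit_supported_distribution P"
    using sets_P by (simp add: unit_supported_distribution_def unit_supported_distribution_axioms_def
        real_distribution_def real_distribution_axioms_def)
qed

lemma expectation_time_integral:
  fixes g :: "real \<Rightarrow> real"
  assumes g: "continuous_on UNIV g"
  shows "integrable M (\<lambda>\<omega>. \<integral>t\<in>{0..T}. g (\<delta> \<omega> t) \<partial>lebesgue)"
    and "(\<integral>\<omega>. (\<integral>t\<in>{0..T}. g (\<delta> \<omega> t) \<partial>lebesgue) \<partial>M) = T * (\<integral>x. g x \<partial>P)"
proof -
  let ?D = "\<lambda>(\<omega>, t). \<delta> \<omega> t"
  have [measurable]: "g \<in> borel_measurable borel"
    using g by (rule borel_measurable_continuous_onI)
  have [measurable]: "?D \<in> borel_measurable (M \<Otimes>\<^sub>M horizon)"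
    using joint_measurable by simp
  obtain K where K: "\<And>x. x \<in> {-1..1} \<Longrightarrow> norm (g x) \<le> K"
    using continuous_on_compact_bound[OF compact_Icc continuous_on_subset[OF g]] by blast
  have int: "integrable (M \<Otimes>\<^sub>M horizon) (\<lambda>z. g (?D z))"
  proof (rule pair_finite.integrable_const_bound[where B=K])
    show "AE z in M \<Otimes>\<^sub>M horizon. norm (g (?D z)) \<le> K"
      by (intro AE_I2 K trajectory_range_pair)
  qed simp
  from integral_time_integral_eq_pair_integral[OF int]
  show "integrable M (\<lambda>\<omega>. \<integral>t\<in>{0..T}. g (\<delta> \<omega> t) \<partial>lebesgue)"
    by simp
  have "(\<integral>x. g x \<partial>P) = (\<integral>x. (1 / T) *\<^sub>R g x \<partial>distr (M \<Otimes>\<^sub>M horizon) borel ?D)"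
    using T_pos by (subst occupation_eq_density_distr) (simp add: integral_density)
  also have "\<dots> = (1 / T) * (\<integral>z. g (?D z) \<partial>(M \<Otimes>\<^sub>M horizon))"
    by (simp add: integral_distr)
  also have "(\<integral>z. g (?D z) \<partial>(M \<Otimes>\<^sub>M horizon)) = (\<integral>\<omega>. (\<integral>t\<in>{0..T}. g (\<delta> \<omega> t) \<partial>lebesgue) \<partial>M)"
    using integral_time_integral_eq_pair_integral(2)[OF int] by simp
  finally show "(\<integral>\<omega>. (\<integral>t\<in>{0..T}. g (\<delta> \<omega> t) \<partial>lebesgue) \<partial>M) = T * (\<integral>x. g x \<partial>P)"
    using T_pos by simp
qed

lemma expected_soc:
  "(\<integral>\<omega>. soc \<eta>p \<eta>m xb xr (\<delta> \<omega>) y0 T \<partial>M)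
     = y0 + T * (\<eta>p * xb + \<eta>p * xr * (\<integral>x. x \<partial>P) - (1 / \<eta>m - \<eta>p) * mean_negpart P xb xr)"
proof -
  define g where "g x = \<eta>p * pospart (xb + x * xr) - (1 / \<eta>m) * negpart (xb + x * xr)" for x
  have g_cont: "continuous_on UNIV g"
    unfolding g_def pospart_def negpart_def by (intro continuous_intros)
  have "(\<integral>\<omega>. soc \<eta>p \<eta>m xb xr (\<delta> \<omega>) y0 T \<partial>M) = (\<integral>\<omega>. y0 + (\<integral>t\<in>{0..T}. g (\<delta> \<omega> t) \<partial>lebesgue) \<partial>M)"
    by (simp add: soc_def g_def mult.commute)
  also have "\<dots> = y0 + T * (\<integral>x. g x \<partial>P)"
    using expectation_time_integral[OF g_cont] M.prob_space by simp
  also have "(\<integral>x. g x \<partial>P) = (\<integral>x. \<eta>p * xb + \<eta>p * xr * x - (1 / \<eta>m - \<eta>p) * negpart (xb + x * xr) \<partial>P)"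
    by (simp add: g_def pospart_eq_add_negpart algebra_simps)
  also have "\<dots> = \<eta>p * xb + \<eta>p * xr * (\<integral>x. x \<partial>P) - (1 / \<eta>m - \<eta>p) * mean_negpart P xb xr"
    using integrable_negpart_affine integrable_continuous[of "\<lambda>x. x"] prob_space
    by (simp add: mean_negpart_def)
  finally show ?thesis .
qed

end

theorem proposition2:
  fixes M :: "'a measure" and P\<xi> :: "real measure"
    and \<delta> :: "'a \<Rightarrow> real \<Rightarrow> real"
    and T \<gamma> \<eta>p \<eta>m y0 :: real
  assumes "prob_space M"
    and "T > 0" and "0 < \<gamma>" and "\<gamma> \<le> T"
    and "0 < \<eta>p" and "\<eta>p \<le> 1" and "0 < \<eta>m" and "\<eta>m \<le> 1"
    and traj: "\<forall>\<omega>\<in>space M. admissible T \<gamma> (\<delta> \<omega>)"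
    and joint: "(\<lambda>(\<omega>, t). \<delta> \<omega> t) \<in> borel_measurable (M \<Otimes>\<^sub>M restrict_space lebesgue {0..T})"
    and P\<xi>_sets: "sets P\<xi> = sets borel"
    and P\<xi>_def: "\<forall>B\<in>sets borel. emeasure P\<xi> B =
           ennreal (\<integral>\<omega>. (1 / T) * (\<integral>t\<in>{0..T}. indicator B (\<delta> \<omega> t) \<partial>lebesgue) \<partial>M)"
    and mean_zero: "(\<integral>\<xi>. \<xi> \<partial>P\<xi>) = 0"
  defines "\<phi> \<equiv> (\<lambda>z. LBINT \<xi>=-1..z. cdf P\<xi> \<xi>)"
    and "\<eta>d \<equiv> 1 / \<eta>m - \<eta>p"
    and "Ey \<equiv> (\<lambda>xb xr. \<integral>\<omega>. soc \<eta>p \<eta>m xb xr (\<delta> \<omega>) y0 T \<partial>M)"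
  shows "(\<forall>xb xr. xr \<ge> 0 \<longrightarrow> Ey xb xr = y0 + T * (\<eta>p * xb - \<eta>d * persp \<phi> xb xr))
       \<and> continuous_on {p :: real \<times> real. snd p \<ge> 0} (\<lambda>p. Ey (fst p) (snd p))
       \<and> concave_on {p :: real \<times> real. snd p \<ge> 0} (\<lambda>p. Ey (fst p) (snd p))
       \<and> (\<forall>xr \<ge> 0. strict_mono (\<lambda>xb. Ey xb xr))
       \<and> (\<forall>xr \<ge> 0. filterlim (\<lambda>xb. Ey xb xr) at_top at_top)
       \<and> (\<forall>xb. antimono_on {0..} (\<lambda>xr. Ey xb xr))"
proof -
  have range: "\<forall>\<omega>\<in>space M. \<forall>t\<in>{0..T}. \<delta> \<omega> t \<in> {-1..1}"
    using traj by (simp add: admissible_def)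
  interpret occupation_measure M P\<xi> \<delta> T
    using assms(1,2) range joint P\<xi>_sets P\<xi>_def by (rule occupation_measure.intro)
  let ?G = "mean_negpart P\<xi>"
  have Ey_eq: "Ey = (\<lambda>xb xr. y0 + T * (\<eta>p * xb - \<eta>d * ?G xb xr))"
    by (simp add: Ey_def \<eta>d_def expected_soc mean_zero)
  have \<eta>d: "0 \<le> \<eta>d"
    using assms(5-8) mult_le_one[of \<eta>m \<eta>p] by (simp add: \<eta>d_def field_simps)
  have pos: "0 < T" "0 < \<eta>p"
    using assms(2,5) by simp_all
  have Ey_increment: "T * \<eta>p * (b - a) \<le> Ey b c - Ey a c" if "a \<le> b" for a b c
    using mult_left_mono[OF mean_negpart_antimono[OF that, of c] \<eta>d] \<open>0 < T\<close>
    by (simp add: Ey_eq algebra_simps)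
  have "convex {p :: real \<times> real. snd p \<ge> 0}"
    by (auto simp: convex_def)
  show ?thesis
  proof (intro conjI allI impI)
    show "Ey xb xr = y0 + T * (\<eta>p * xb - \<eta>d * persp \<phi> xb xr)" if "0 \<le> xr" for xb xr
      using that by (simp add: Ey_eq \<phi>_def persp_integral_cdf_eq_mean_negpart)
    show "continuous_on {p. snd p \<ge> 0} (\<lambda>p. Ey (fst p) (snd p))"
      unfolding Ey_eq by (intro continuous_intros)
    show "concave_on {p. snd p \<ge> 0} (\<lambda>p. Ey (fst p) (snd p))"
      unfolding Ey_eq using \<eta>d pos \<open>convex {p. snd p \<ge> 0}\<close>
      by (intro concave_on_add concave_on_const[THEN iffD2] concave_on_cmul concave_on_diff
          concave_on_linear convex_on_cmul convex_on_subset[OF mean_negpart_convex])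
        (auto intro!: bounded_linear.linear bounded_linear_intros)
    show "strict_mono (\<lambda>xb. Ey xb xr)" "filterlim (\<lambda>xb. Ey xb xr) at_top at_top" for xr
      using Ey_increment pos by (intro slope_ge_imp_strict_mono_at_top[where k="T * \<eta>p"]; simp)+
    show "antimono_on {0..} (\<lambda>xr. Ey xb xr)" for xb
      using mean_negpart_mono[OF mean_zero] \<eta>d pos
      by (intro monotone_onI) (simp add: Ey_eq mult_left_mono)
  qed
qed

end
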